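(* Consider the $N$-SP bandwidth allocation game with minimum small-cell bandwidth constraints described in the context, and let $a=N_f\lambda_S^{1/\alpha-1}$. If $$\frac{a}{a+N_m}\sum_{i\in\mathcal N}B_i<\sum_{i\in\mathcal N}B_{i,S}^0,$$ then $\mathrm{SW}_{\mathrm{w}}^{\mathrm{NE}}<\mathrm{SW}_{\mathrm{wo}}^{*}$ (a social welfare loss is incurred). Moreover, in all cases $$\frac{\mathrm{SW}_{\mathrm{w}}^{\mathrm{NE}}}{\mathrm{SW}_{\mathrm{wo}}^{*}}\ge\Big(\frac{a}{a+N_m}\Big)^{\alpha},$$ and this bound is attained exactly when $B_{i,S}^0=B_i$ for all $i\in\mathcal N$.
   Context: A set $\mathcal N$ of $N$ service providers (SPs). SP $i$ owns bandwidth $B_i>0$ and chooses macro-cell bandwidth $B_{i,M}\ge0$ and small-cell bandwidth $B_{i,S}$ with $B_{i,M}+B_{i,S}\le B_i$ and $B_{i,S}\ge B_{i,S}^0$ (regulatory constraint), where $0\le B_{i,S}^0\le B_i$ are given. Parameters: $R_0>0$, $\lambda_S>1$, a mass $N_m>0$ of mobile users (served only by macro-cells) and a mass $N_f>0$ of fixed users, each with utility $u(r)=r^{1-\alpha}/(1-\alpha)$, $\alpha\in(0,1)$. Second-stage prices are market-clearing: with $R_M=\frac{R_0\sum_iB_{i,M}}{N_m}$ and $R_S=\frac{\lambda_SR_0\sum_iB_{i,S}}{N_f}$, the macro and small-cell prices are $u'(R_M)=R_M^{-\alpha}$ and $u'(R_S)=R_S^{-\alpha}$, and each mobile user receives rate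 $R_M$ and each fixed user rate $R_S$. SP $i$'s payoff in the bandwidth game is its revenue $S_i=\lambda_SB_{i,S}R_0R_S^{-\alpha}+B_{i,M}R_0R_M^{-\alpha}$. Social welfare is $\mathrm{SW}=N_mu(R_M)+N_fu(R_S)$. $\mathrm{SW}_{\mathrm{w}}^{\mathrm{NE}}$ denotes the social welfare at the Nash equilibrium of the game with the regulatory constraints, and $\mathrm{SW}_{\mathrm{wo}}^{*}$ the social welfare at the Nash equilibrium of the game without them ($B_{i,S}^0=0$), which equals the maximal social welfare without constraints. *)

theory Defs
  imports Complex_Main
begin

text \<open>Bandwidth allocation game. SPs are indexed by a finite set I; a strategy profile
is a pair of functions BM (macro-cell bandwidth) and BS (small-cell bandwidth) on I.\<close>

definition feasible :: "'i set \<Rightarrow> ('i \<Rightarrow> real) \<Rightarrow> ('i \<Rightarrow> real) \<Rightarrow> ('i \<Rightarrow> real) \<Rightarrow> ('i \<Rightarrow> real) \<Rightarrow> bool" where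
  "feasible I B B0 BM BS \<longleftrightarrow> (\<forall>i\<in>I. BM i \<ge> 0 \<and> BS i \<ge> B0 i \<and> BM i + BS i \<le> B i)"

definition rate_M :: "real \<Rightarrow> real \<Rightarrow> 'i set \<Rightarrow> ('i \<Rightarrow> real) \<Rightarrow> real" where
  "rate_M R0 Nm I BM = R0 * (\<Sum>i\<in>I. BM i) / Nm"

definition rate_S :: "real \<Rightarrow> real \<Rightarrow> real \<Rightarrow> 'i set \<Rightarrow> ('i \<Rightarrow> real) \<Rightarrow> real" where
  "rate_S R0 lS Nf I BS = lS * R0 * (\<Sum>i\<in>I. BS i) / Nf"

definition util :: "real \<Rightarrow> real \<Rightarrow> real" where
  "util \<alpha> r = r powr (1 - \<alpha>) / (1 - \<alpha>)"

text \<open>Revenue of SP i; prices are u'(R) = R powr (-alpha).\<close>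
definition revenue :: "real \<Rightarrow> real \<Rightarrow> real \<Rightarrow> real \<Rightarrow> real \<Rightarrow> 'i set \<Rightarrow>
    ('i \<Rightarrow> real) \<Rightarrow> ('i \<Rightarrow> real) \<Rightarrow> 'i \<Rightarrow> real" where
  "revenue R0 lS Nm Nf \<alpha> I BM BS i =
     lS * BS i * R0 * (rate_S R0 lS Nf I BS) powr (-\<alpha>)
     + BM i * R0 * (rate_M R0 Nm I BM) powr (-\<alpha>)"

definition social_welfare :: "real \<Rightarrow> real \<Rightarrow> real \<Rightarrow> real \<Rightarrow> real \<Rightarrow> 'i set \<Rightarrow>
    ('i \<Rightarrow> real) \<Rightarrow> ('i \<Rightarrow> real) \<Rightarrow> real" where
  "social_welfare R0 lS Nm Nf \<alpha> I BM BS =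
     Nm * util \<alpha> (rate_M R0 Nm I BM) + Nf * util \<alpha> (rate_S R0 lS Nf I BS)"

definition is_NE :: "real \<Rightarrow> real \<Rightarrow> real \<Rightarrow> real \<Rightarrow> real \<Rightarrow> 'i set \<Rightarrow> ('i \<Rightarrow> real) \<Rightarrow> ('i \<Rightarrow> real) \<Rightarrow>
    ('i \<Rightarrow> real) \<Rightarrow> ('i \<Rightarrow> real) \<Rightarrow> bool" where
  "is_NE R0 lS Nm Nf \<alpha> I B B0 BM BS \<longleftrightarrow>
     feasible I B B0 BM BS \<and>
     (\<forall>i\<in>I. \<forall>m s. feasible I B B0 (BM(i := m)) (BS(i := s)) \<longrightarrow>
        revenue R0 lS Nm Nf \<alpha> I (BM(i := m)) (BS(i := s)) i \<le> revenue R0 lS Nm Nf \<alpha> I BM BS i)"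

end

theory Submission
  imports Defs "HOL-Analysis.Convex" "HOL-Real_Asymp.Real_Asymp"
begin

text \<open>Welfare depends only on the total macro-cell and small-cell bandwidths \<open>M\<close> and \<open>S\<close>; it is
  strictly concave, and along \<open>M + S = \<Sum>\<^sub>i B\<^sub>i\<close> its slope in \<open>S\<close> is the difference of the
  unit prices \<open>p\<^sub>S(S) - p\<^sub>M(M)\<close>. At a Nash equilibrium no bandwidth is left idle, and since a
  provider gains by moving a little bandwidth into the dearer market (or into an empty one),
  \<open>p\<^sub>S \<le> p\<^sub>M\<close> whenever \<open>M > 0\<close>, with equality without the constraints. So the unconstrained
  equilibrium maximises welfare on the line, with \<open>S = a / (a + N\<^sub>m) \<Sum>\<^sub>i B\<^sub>i\<close>, and any
  constrained equilibrium is at least as good as putting all bandwidth into small cells, which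
  by homogeneity of the utility achieves exactly the fraction \<open>(a / (a + N\<^sub>m))\<^sup>\<alpha>\<close> of the maximum.\<close>

section \<open>Concavity of the utility\<close>

lemma powr_one_minus_lt_tangent:
  fixes a r :: real
  assumes "0 < a" "a < 1" "0 \<le> r" "r \<noteq> 1"
  shows "r powr (1 - a) < a + (1 - a) * r"
proof -
  have weak: "s powr (1 - a) \<le> a + (1 - a) * s" if "0 < s" for s :: real
    using Youngs_inequality_0[of "1 - a" a s 1] assms that by simp
  show ?thesis
  proof (cases "r = 0")
    case True
    then show ?thesis using assms by simp
  next
    case False
    \<comment> \<open>Squaring the weak bound at \<open>sqrt r\<close> leaves the slack \<open>a (1 - a) (1 - sqrt r)\<^sup>2\<close>.\<close>
    define s where "s = sqrt r"
    have s: "0 < s" "s \<noteq> 1" "r = s * s"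
      using assms False by (auto simp: s_def)
    have "r powr (1 - a) = s powr (1 - a) * s powr (1 - a)"
      using s by (simp add: powr_mult)
    also have "\<dots> \<le> (a + (1 - a) * s) * (a + (1 - a) * s)"
      using weak[OF s(1)] assms s by (intro mult_mono) auto
    also have "\<dots> = a + (1 - a) * r - a * (1 - a) * (1 - s)\<^sup>2"
      by (simp add: s(3) algebra_simps power2_eq_square)
    also have "\<dots> < a + (1 - a) * r"
      using assms s by simp
    finally show ?thesis .
  qed
qed

lemma util_homogeneous:
  "util \<alpha> (c * x) = c powr (1 - \<alpha>) * util \<alpha> x"
  by (simp add: util_def powr_mult)

lemma util_lt_tangent:
  fixes \<alpha> x y :: real
  assumes "0 < \<alpha>" "\<alpha> < 1" "0 < x" "0 \<le> y" "y \<noteq> x"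
  shows "util \<alpha> y < util \<alpha> x + x powr (-\<alpha>) * (y - x)"
proof -
  define p where "p = x powr (-\<alpha>)"
  have px: "x powr (1 - \<alpha>) = p * x"
    using assms powr_add[of x "-\<alpha>" 1] by (simp add: p_def)
  have "0 < p"
    using assms by (simp add: p_def)
  have "y powr (1 - \<alpha>) = p * x * (y / x) powr (1 - \<alpha>)"
    using assms \<open>0 < p\<close> by (simp add: powr_divide px)
  also have "\<dots> < p * x * (\<alpha> + (1 - \<alpha>) * (y / x))"
    using assms \<open>0 < p\<close> by (intro mult_strict_left_mono powr_one_minus_lt_tangent) auto
  also have "\<dots> = p * x + (1 - \<alpha>) * (p * (y - x))"
    using assms by (simp add: field_simps)
  finally have "y powr (1 - \<alpha>) / (1 - \<alpha>) < (p * x + (1 - \<alpha>) * (p * (y - x))) / (1 - \<alpha>)"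
    using assms by (intro divide_strict_right_mono) auto
  also have "\<dots> = util \<alpha> x + p * (y - x)"
    using assms by (simp add: util_def px add_divide_distrib)
  finally show ?thesis
    by (simp add: util_def p_def)
qed

section \<open>Prices and revenues\<close>

text \<open>The revenue \<open>c u'(k x)\<close> per unit of bandwidth in a market whose total bandwidth \<open>x\<close> gives
  every user the rate \<open>k x\<close>.\<close>
definition bandwidth_price :: "real \<Rightarrow> real \<Rightarrow> real \<Rightarrow> real \<Rightarrow> real" where
  "bandwidth_price \<alpha> c k x = c * (k * x) powr (-\<alpha>)"

lemma scaled_util_lt_tangent:
  assumes "0 < \<alpha>" "\<alpha> < 1" "0 < N" "0 < k" "c = N * k" "0 < x" "0 \<le> y" "y \<noteq> x"
  shows "N * util \<alpha> (k * y) < N * util \<alpha> (k * x) + bandwidth_price \<alpha> c k x * (y - x)"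
proof -
  have "util \<alpha> (k * y) < util \<alpha> (k * x) + (k * x) powr (-\<alpha>) * (k * y - k * x)"
    using assms by (intro util_lt_tangent) auto
  from mult_strict_left_mono[OF this \<open>0 < N\<close>] show ?thesis
    using assms by (simp add: bandwidth_price_def algebra_simps)
qed

lemma bandwidth_price_antimono:
  assumes "0 \<le> \<alpha>" "0 \<le> c" "0 < k" "0 < x" "x \<le> y"
  shows "bandwidth_price \<alpha> c k y \<le> bandwidth_price \<alpha> c k x"
  unfolding bandwidth_price_def using assms
  by (intro mult_left_mono powr_mono2') auto

lemma bandwidth_price_at_right_0:
  assumes "0 < \<alpha>" "0 < c" "0 < k"
  shows "filterlim (bandwidth_price \<alpha> c k) at_top (at_right 0)"
  unfolding bandwidth_price_def using assms by real_asymp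

lemma at_right_0_witness:
  fixes P :: "real \<Rightarrow> bool"
  assumes "\<forall>\<^sub>F t in at_right 0. P t" "0 < u"
  obtains t where "0 < t" "t < u" "P t"
proof -
  have "\<forall>\<^sub>F t in at_right 0. t \<in> {0<..<u} \<and> P t"
    using eventually_at_right_real[OF \<open>0 < u\<close>] assms(1) by (rule eventually_conj)
  then obtain t where "t \<in> {0<..<u}" "P t"
    using eventually_happens'[OF trivial_limit_at_right_real] by blast
  then show thesis
    using that by auto
qed

lemma holding_revenue_lt_add:
  assumes "0 < \<alpha>" "\<alpha> < 1" "0 < c" "0 < k" "0 \<le> b" "b \<le> S" "0 < d"
  shows "b * bandwidth_price \<alpha> c k S < (b + d) * bandwidth_price \<alpha> c k (S + d)"
proof (cases "b = 0")
  case True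
  then show ?thesis
    using assms by (simp add: bandwidth_price_def)
next
  case False
  define q where "q = S / (S + d)"
  have q: "0 < q" "q < 1"
    using assms False by (auto simp: q_def)
  have "0 < S"
    using assms False by simp
  have price_Sd: "bandwidth_price \<alpha> c k (S + d) = bandwidth_price \<alpha> c k S * q powr \<alpha>"
  proof -
    have "k * (S + d) = k * S / q"
      using assms \<open>0 < S\<close> by (simp add: q_def)
    then show ?thesis
      using assms \<open>0 < S\<close> q by (simp add: bandwidth_price_def powr_divide powr_minus_divide)
  qed
  have "b \<le> (b + d) * q"
    using assms False by (simp add: q_def field_simps mult_left_mono)
  also have "\<dots> < (b + d) * q powr \<alpha>"
    using powr_less_mono'[OF q, of \<alpha> 1] assms by simp
  finally have "b < (b + d) * q powr \<alpha>" .
  moreover have "0 < bandwidth_price \<alpha> c k S"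
    using assms \<open>0 < S\<close> by (simp add: bandwidth_price_def)
  ultimately show ?thesis
    by (simp add: price_Sd mult.assoc)
qed

lemma holding_revenue_has_derivative:
  assumes "0 < k" "0 < X"
  shows "((\<lambda>t. (x + s * t) * bandwidth_price \<alpha> c k (X + s * t))
      has_real_derivative s * bandwidth_price \<alpha> c k X * (1 - \<alpha> * x / X)) (at 0)"
proof -
  have "(k * X) powr (-\<alpha> - 1) = (k * X) powr (-\<alpha>) / (k * X)"
    using assms by (simp add: powr_diff)
  then show ?thesis
    unfolding bandwidth_price_def using assms
    by (auto intro!: derivative_eq_intros simp: field_simps)
qed

lemma marginal_revenue_lt:
  fixes \<alpha> X Y x y p1 p2 :: real
  assumes "0 < \<alpha>" "\<alpha> < 1" "0 < X" "0 < Y" "y \<le> Y" "x / X \<le> y / Y" "p2 < p1" "0 \<le> p1"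
  shows "p2 * (1 - \<alpha> * y / Y) < p1 * (1 - \<alpha> * x / X)"
proof -
  have "\<alpha> * y < Y"
  proof (cases "y \<le> 0")
    case True
    then have "\<alpha> * y \<le> 0"
      using assms by (intro mult_nonneg_nonpos) auto
    then show ?thesis
      using assms by linarith
  next
    case False
    then have "\<alpha> * y < 1 * y"
      using assms by (intro mult_strict_right_mono) auto
    then show ?thesis
      using assms by linarith
  qed
  then have "p2 * (1 - \<alpha> * y / Y) < p1 * (1 - \<alpha> * y / Y)"
    using assms by (intro mult_strict_right_mono) auto
  also have "\<dots> \<le> p1 * (1 - \<alpha> * x / X)"
    using assms mult_left_mono[of "x / X" "y / Y" \<alpha>] by (intro mult_left_mono) auto
  finally show ?thesis .
qed

text \<open>At \<open>t = 0\<close>, the revenue after shifting \<open>t\<close> from the second market to the first has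
  derivative \<open>p1 X (1 - \<alpha> x / X) - p2 Y (1 - \<alpha> y / Y)\<close>, the difference of the marginal revenues.\<close>
lemma shift_to_dearer_market:
  fixes \<alpha> c1 k1 c2 k2 :: real and p1 p2 :: "real \<Rightarrow> real"
  defines "p1 \<equiv> bandwidth_price \<alpha> c1 k1" and "p2 \<equiv> bandwidth_price \<alpha> c2 k2"
  assumes "0 < \<alpha>" "\<alpha> < 1" "0 \<le> c1" "0 < k1" "0 < k2" "0 < X" "0 < Y" "y \<le> Y"
    and "x / X \<le> y / Y" and "p2 Y < p1 X"
  shows "\<forall>\<^sub>F t in at_right 0. x * p1 X + y * p2 Y < (x + t) * p1 (X + t) + (y - t) * p2 (Y - t)"
proof -
  define f where "f t = (x + t) * p1 (X + t) + (y - t) * p2 (Y - t)" for t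
  have "((\<lambda>t. (x + 1 * t) * p1 (X + 1 * t) + (y + -1 * t) * p2 (Y + -1 * t))
      has_real_derivative 1 * p1 X * (1 - \<alpha> * x / X) + -1 * p2 Y * (1 - \<alpha> * y / Y)) (at 0)"
    unfolding p1_def p2_def using assms
    by (intro DERIV_add holding_revenue_has_derivative) auto
  then have "(f has_real_derivative p1 X * (1 - \<alpha> * x / X) - p2 Y * (1 - \<alpha> * y / Y)) (at 0)"
    by (simp add: f_def[abs_def])
  moreover have "0 < p1 X * (1 - \<alpha> * x / X) - p2 Y * (1 - \<alpha> * y / Y)"
    using marginal_revenue_lt[of \<alpha> X Y y x "p2 Y" "p1 X"] assms by (simp add: p1_def bandwidth_price_def)
  ultimately obtain d where "0 < d" and "\<forall>h>0. h < d \<longrightarrow> f 0 < f (0 + h)"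
    by (blast dest: DERIV_pos_inc_right)
  then show ?thesis
    unfolding eventually_at_right_field f_def by auto
qed

lemma entering_empty_market_pays:
  fixes \<alpha> c1 k1 c2 k2 :: real and p1 p2 :: "real \<Rightarrow> real"
  defines "p1 \<equiv> bandwidth_price \<alpha> c1 k1" and "p2 \<equiv> bandwidth_price \<alpha> c2 k2"
  assumes "0 < \<alpha>" "0 < c1" "0 < k1" "0 \<le> c2" "0 < k2" "0 < y" "y \<le> Y"
  shows "\<forall>\<^sub>F t in at_right 0. y * p2 Y < t * p1 t + (y - t) * p2 (Y - t)"
proof -
  have "\<forall>\<^sub>F t in at_right 0. p2 Y < p1 t"
    using bandwidth_price_at_right_0[of \<alpha> c1 k1] assms
    unfolding filterlim_at_top_dense p1_def by blast
  moreover have "\<forall>\<^sub>F t in at_right 0. t \<in> {0<..<y}"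
    using assms by (intro eventually_at_right_real) auto
  ultimately show ?thesis
  proof eventually_elim
    case (elim t)
    then have "p2 Y \<le> p2 (Y - t)"
      using assms unfolding p2_def by (intro bandwidth_price_antimono) auto
    then have "(y - t) * p2 Y \<le> (y - t) * p2 (Y - t)"
      using elim by (intro mult_left_mono) auto
    then have "y * p2 Y \<le> t * p2 Y + (y - t) * p2 (Y - t)"
      by (simp add: algebra_simps)
    also have "\<dots> < t * p1 t + (y - t) * p2 (Y - t)"
      using elim by simp
    finally show ?case .
  qed
qed

locale bandwidth_market =
  fixes R0 lS Nm Nf \<alpha> :: real
  assumes R0_pos: "0 < R0" and lS_pos: "0 < lS" and Nm_pos: "0 < Nm" and Nf_pos: "0 < Nf"
    and \<alpha>_pos: "0 < \<alpha>" and \<alpha>_lt_1: "\<alpha> < 1"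
begin

abbreviation price_M :: "real \<Rightarrow> real" where
  "price_M \<equiv> bandwidth_price \<alpha> R0 (R0 / Nm)"

abbreviation price_S :: "real \<Rightarrow> real" where
  "price_S \<equiv> bandwidth_price \<alpha> (lS * R0) (lS * R0 / Nf)"

definition welfare :: "real \<Rightarrow> real \<Rightarrow> real" where
  "welfare M S = Nm * util \<alpha> (R0 / Nm * M) + Nf * util \<alpha> (lS * R0 / Nf * S)"

text \<open>The constant \<open>a\<close> of the paper: when the two prices agree, the small cells carry the
  fraction \<open>a / (a + Nm)\<close> of the bandwidth.\<close>
definition effective_Nf :: real where
  "effective_Nf = Nf * lS powr (1 / \<alpha> - 1)"

lemma effective_Nf_pos: "0 < effective_Nf"
  using Nf_pos lS_pos by (simp add: effective_Nf_def)

lemma revenue_eq: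
  "revenue R0 lS Nm Nf \<alpha> I BM BS i = BS i * price_S (sum BS I) + BM i * price_M (sum BM I)"
  by (simp add: revenue_def rate_S_def rate_M_def bandwidth_price_def mult_ac)

lemma social_welfare_eq:
  "social_welfare R0 lS Nm Nf \<alpha> I BM BS = welfare (sum BM I) (sum BS I)"
  by (simp add: social_welfare_def welfare_def rate_S_def rate_M_def mult_ac)

lemma welfare_pos:
  assumes "0 < M" "0 \<le> S"
  shows "0 < welfare M S"
  using assms R0_pos Nm_pos Nf_pos lS_pos \<alpha>_lt_1
  by (simp add: welfare_def util_def add_pos_nonneg)

lemma welfare_lt_tangent:
  assumes "0 < M" "0 < S" "0 \<le> M'" "0 \<le> S'" "M' + S' = M + S" "S' \<noteq> S"
  shows "welfare M' S' < welfare M S + (S' - S) * (price_S S - price_M M)"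
proof -
  have "Nm * util \<alpha> (R0 / Nm * M') < Nm * util \<alpha> (R0 / Nm * M) + price_M M * (M' - M)"
    using assms R0_pos Nm_pos \<alpha>_pos \<alpha>_lt_1 by (intro scaled_util_lt_tangent) auto
  moreover have "Nf * util \<alpha> (lS * R0 / Nf * S') < Nf * util \<alpha> (lS * R0 / Nf * S) + price_S S * (S' - S)"
    using assms R0_pos Nf_pos lS_pos \<alpha>_pos \<alpha>_lt_1 by (intro scaled_util_lt_tangent) auto
  moreover have "M' - M = - (S' - S)"
    using assms by simp
  ultimately show ?thesis
    by (simp add: welfare_def algebra_simps)
qed

lemma balanced_prices_share:
  assumes "0 < M" "0 < S" "price_S S = price_M M"
  shows "Nm * S = effective_Nf * M"
proof -
  define x u where "x = R0 / Nm * M" and "u = lS * R0 / Nf * S"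
  have "0 < x" "0 < u"
    using assms R0_pos Nm_pos Nf_pos lS_pos by (auto simp: x_def u_def)
  have "lS * R0 * u powr (-\<alpha>) = R0 * x powr (-\<alpha>)"
    using assms(3) by (simp add: bandwidth_price_def x_def u_def)
  then have "lS = (u / x) powr \<alpha>"
    using \<open>0 < x\<close> \<open>0 < u\<close> R0_pos by (simp add: powr_minus_divide powr_divide field_simps)
  then have "u = lS powr (1 / \<alpha>) * x"
    using \<open>0 < x\<close> \<open>0 < u\<close> \<alpha>_pos by (simp add: powr_powr)
  moreover have "lS powr (1 / \<alpha>) = lS * lS powr (1 / \<alpha> - 1)"
    using lS_pos by (simp add: powr_diff)
  ultimately show ?thesis
    using R0_pos Nm_pos Nf_pos lS_pos by (simp add: x_def u_def effective_Nf_def field_simps)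
qed

lemma welfare_all_small:
  assumes "0 < M" "Nm * S = effective_Nf * M"
  shows "welfare 0 (M + S) = (effective_Nf / (effective_Nf + Nm)) powr \<alpha> * welfare M S"
proof -
  define a L x k where "a = effective_Nf" and "L = lS powr (1 / \<alpha>)" and "x = R0 / Nm * M"
    and "k = (a + Nm) / a"
  have "0 < a" "0 < k"
    using effective_Nf_pos Nm_pos by (auto simp: a_def k_def)
  have "1 / \<alpha> * (1 - \<alpha>) = 1 / \<alpha> - 1"
    using \<alpha>_pos by (simp add: field_simps)
  then have aL: "a = Nf * L / lS" "a = Nf * L powr (1 - \<alpha>)"
    using lS_pos \<alpha>_pos by (simp_all add: a_def L_def effective_Nf_def powr_diff powr_powr)
  have S_rate: "lS * R0 / Nf * S = L * x"
    using assms Nm_pos Nf_pos lS_pos by (simp add: aL(1) x_def a_def[symmetric] field_simps)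
  have "0 < L"
    using lS_pos by (simp add: L_def)
  have "lS * R0 / Nf * M = Nm / a * (L * x)"
    using \<open>0 < L\<close> Nm_pos Nf_pos lS_pos by (simp add: aL(1) x_def)
  then have "lS * R0 / Nf * (M + S) = Nm / a * (L * x) + L * x"
    by (simp only: distrib_left S_rate)
  also have "\<dots> = k * (L * x)"
    using \<open>0 < a\<close> by (simp add: k_def field_simps)
  finally have total_rate: "lS * R0 / Nf * (M + S) = k * (L * x)" .
  have "welfare M S = (Nm + a) * util \<alpha> x"
    unfolding welfare_def S_rate x_def[symmetric] by (simp add: util_homogeneous aL(2) algebra_simps)
  moreover have "welfare 0 (M + S) = a * k powr (1 - \<alpha>) * util \<alpha> x"
    unfolding welfare_def total_rate by (simp add: util_homogeneous aL(2) util_def powr_mult)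
  moreover have "a * k powr (1 - \<alpha>) = (a / (a + Nm)) powr \<alpha> * (Nm + a)"
    using \<open>0 < a\<close> \<open>0 < k\<close> Nm_pos by (simp add: powr_diff k_def powr_divide field_simps)
  ultimately show ?thesis
    by (simp add: a_def)
qed

end

section \<open>Equilibria\<close>

lemma sum_fun_upd:
  fixes f :: "'i \<Rightarrow> 'a::ab_group_add"
  assumes "finite I" "i \<in> I"
  shows "sum (f(i := v)) I = sum f I - f i + v"
proof -
  have "sum (f(i := v)) (I - {i}) = sum f (I - {i})"
    by (rule sum.cong) auto
  then show ?thesis
    using sum.remove[OF assms, of "f(i := v)"] sum.remove[OF assms, of f]
    by (simp add: algebra_simps)
qed

lemma exists_share_ge:
  fixes x y :: "'i \<Rightarrow> real"
  assumes "finite I" "\<forall>i\<in>I. 0 \<le> x i" "\<forall>i\<in>I. 0 \<le> y i" "0 < sum x I" "0 < sum y I"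
  shows "\<exists>i\<in>I. 0 < y i \<and> x i / sum x I \<le> y i / sum y I"
proof (rule ccontr)
  assume contra: "\<not> ?thesis"
  define J where "J = {i\<in>I. 0 < y i}"
  have "finite J"
    using assms by (simp add: J_def)
  have sum_y: "sum y J = sum y I"
    using assms by (intro sum.mono_neutral_left) (auto simp: J_def)
  then have "J \<noteq> {}"
    using assms by auto
  have "1 = sum (\<lambda>i. y i / sum y I) J"
    using sum_y assms by (simp add: sum_divide_distrib[symmetric])
  also have "\<dots> < sum (\<lambda>i. x i / sum x I) J"
    using \<open>finite J\<close> \<open>J \<noteq> {}\<close> contra by (intro sum_strict_mono) (auto simp: J_def)
  also have "\<dots> \<le> 1"
  proof -
    have "sum x J \<le> sum x I"
      using assms by (intro sum_mono2) (auto simp: J_def)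
    then show ?thesis
      using assms by (simp add: sum_divide_distrib[symmetric])
  qed
  finally show False
    by simp
qed

locale bandwidth_equilibrium = bandwidth_market +
  fixes I :: "'i set" and B B0 BM BS :: "'i \<Rightarrow> real"
  assumes finite_I: "finite I" and I_nonempty: "I \<noteq> {}" and B_pos: "\<And>i. i \<in> I \<Longrightarrow> 0 < B i"
    and B0_nonneg: "\<And>i. i \<in> I \<Longrightarrow> 0 \<le> B0 i" and B0_le_B: "\<And>i. i \<in> I \<Longrightarrow> B0 i \<le> B i"
    and equilibrium: "is_NE R0 lS Nm Nf \<alpha> I B B0 BM BS"
begin

abbreviation total_M :: real where
  "total_M \<equiv> sum BM I"

abbreviation total_S :: real where
  "total_S \<equiv> sum BS I"

lemma feasible_equilibrium:
  assumes "i \<in> I"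
  shows "0 \<le> BM i" "B0 i \<le> BS i" "BM i + BS i \<le> B i" "0 \<le> BS i"
  using equilibrium assms B0_nonneg[OF assms]
  by (auto simp: is_NE_def feasible_def intro: order_trans)

lemma holding_le_total:
  assumes "i \<in> I"
  shows "BM i \<le> total_M" "BS i \<le> total_S"
  using assms feasible_equilibrium finite_I by (auto intro: member_le_sum)

lemma no_profitable_deviation:
  assumes "i \<in> I" "0 \<le> m" "B0 i \<le> s" "m + s \<le> B i"
  shows "s * price_S (total_S - BS i + s) + m * price_M (total_M - BM i + m)
    \<le> BS i * price_S total_S + BM i * price_M total_M"
proof -
  have "feasible I B B0 (BM(i := m)) (BS(i := s))"
    using feasible_equilibrium assms by (auto simp: feasible_def)
  then have "revenue R0 lS Nm Nf \<alpha> I (BM(i := m)) (BS(i := s)) i \<le> revenue R0 lS Nm Nf \<alpha> I BM BS i"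
    using equilibrium assms by (simp add: is_NE_def)
  then show ?thesis
    unfolding revenue_eq sum_fun_upd[OF finite_I assms(1)] by simp
qed

lemma full_usage:
  assumes "i \<in> I"
  shows "BM i + BS i = B i"
proof (rule ccontr)
  assume "BM i + BS i \<noteq> B i"
  then have "0 < B i - BM i - BS i"
    using feasible_equilibrium[OF assms] by simp
  then obtain d where d: "0 < d" "BM i + (BS i + d) = B i"
    by (intro that[of "B i - BM i - BS i"]) auto
  have "BS i * price_S total_S < (BS i + d) * price_S (total_S + d)"
    using assms d R0_pos Nf_pos lS_pos \<alpha>_pos \<alpha>_lt_1 feasible_equilibrium holding_le_total
    by (intro holding_revenue_lt_add) auto
  moreover have "(BS i + d) * price_S (total_S - BS i + (BS i + d)) + BM i * price_M (total_M - BM i + BM i)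
      \<le> BS i * price_S total_S + BM i * price_M total_M"
    using assms d feasible_equilibrium[OF assms] by (intro no_profitable_deviation) auto
  ultimately show False
    by simp
qed

lemma total_usage: "total_M + total_S = sum B I"
  using full_usage by (simp add: sum.distrib[symmetric])

lemma total_S_pos: "0 < total_S"
proof (rule ccontr)
  assume "\<not> 0 < total_S"
  then have "total_S = 0"
    using sum_nonneg[of I BS] feasible_equilibrium(4) by force
  then have no_S: "BS j = 0" if "j \<in> I" for j
    using finite_I feasible_equilibrium(4) that sum_nonneg_eq_0_iff by blast
  obtain i where i: "i \<in> I"
    using I_nonempty by blast
  have "BM i = B i" "B0 i = 0"
    using full_usage[OF i] feasible_equilibrium[OF i] B0_nonneg[OF i] no_S[OF i] by auto
  then have "0 < BM i"
    using B_pos[OF i] by simp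
  have "\<forall>\<^sub>F t in at_right 0. BM i * price_M total_M < t * price_S t + (BM i - t) * price_M (total_M - t)"
    using R0_pos Nm_pos Nf_pos lS_pos \<alpha>_pos holding_le_total[OF i] \<open>0 < BM i\<close>
    by (intro entering_empty_market_pays) auto
  then obtain t where t: "0 < t" "t < BM i"
    and gain: "BM i * price_M total_M < t * price_S t + (BM i - t) * price_M (total_M - t)"
    using \<open>0 < BM i\<close> by (rule at_right_0_witness)
  have "t * price_S (total_S - BS i + t) + (BM i - t) * price_M (total_M - BM i + (BM i - t))
      \<le> BS i * price_S total_S + BM i * price_M total_M"
    using i t \<open>B0 i = 0\<close> feasible_equilibrium[OF i] by (intro no_profitable_deviation) auto
  with gain show False
    using i no_S finite_I by simp
qed

lemma price_S_le_price_M: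
  assumes "0 < total_M"
  shows "price_S total_S \<le> price_M total_M"
proof (rule ccontr)
  assume dearer: "\<not> ?thesis"
  obtain i where i: "i \<in> I" "0 < BM i" "BS i / total_S \<le> BM i / total_M"
    using exists_share_ge[OF finite_I, of BS BM] feasible_equilibrium total_S_pos assms by auto
  have "\<forall>\<^sub>F t in at_right 0. BS i * price_S total_S + BM i * price_M total_M
      < (BS i + t) * price_S (total_S + t) + (BM i - t) * price_M (total_M - t)"
    using dearer i assms total_S_pos holding_le_total[OF i(1)]
      R0_pos Nm_pos Nf_pos lS_pos \<alpha>_pos \<alpha>_lt_1
    by (intro shift_to_dearer_market) auto
  then obtain t where t: "0 < t" "t < BM i"
    and gain: "BS i * price_S total_S + BM i * price_M total_M
      < (BS i + t) * price_S (total_S + t) + (BM i - t) * price_M (total_M - t)"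
    using i(2) by (rule at_right_0_witness)
  have "(BS i + t) * price_S (total_S - BS i + (BS i + t)) + (BM i - t) * price_M (total_M - BM i + (BM i - t))
      \<le> BS i * price_S total_S + BM i * price_M total_M"
    using i t feasible_equilibrium[OF i(1)] by (intro no_profitable_deviation) auto
  with gain show False
    by simp
qed

lemma price_M_le_price_S:
  assumes "\<And>i. i \<in> I \<Longrightarrow> B0 i = 0" and "0 < total_M"
  shows "price_M total_M \<le> price_S total_S"
proof (rule ccontr)
  assume dearer: "\<not> ?thesis"
  obtain i where i: "i \<in> I" "0 < BS i" "BM i / total_M \<le> BS i / total_S"
    using exists_share_ge[OF finite_I, of BM BS] feasible_equilibrium total_S_pos assms by auto
  have "\<forall>\<^sub>F t in at_right 0. BM i * price_M total_M + BS i * price_S total_S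
      < (BM i + t) * price_M (total_M + t) + (BS i - t) * price_S (total_S - t)"
    using dearer i assms total_S_pos holding_le_total[OF i(1)]
      R0_pos Nm_pos Nf_pos lS_pos \<alpha>_pos \<alpha>_lt_1
    by (intro shift_to_dearer_market) auto
  then obtain t where t: "0 < t" "t < BS i"
    and gain: "BM i * price_M total_M + BS i * price_S total_S
      < (BM i + t) * price_M (total_M + t) + (BS i - t) * price_S (total_S - t)"
    using i(2) by (rule at_right_0_witness)
  have "(BS i - t) * price_S (total_S - BS i + (BS i - t)) + (BM i + t) * price_M (total_M - BM i + (BM i + t))
      \<le> BS i * price_S total_S + BM i * price_M total_M"
    using i t assms(1) feasible_equilibrium[OF i(1)] by (intro no_profitable_deviation) auto
  with gain show False
    by simp
qed

lemma total_M_eq_0_iff: "total_M = 0 \<longleftrightarrow> (\<forall>i\<in>I. B0 i = B i)"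
proof
  assume "total_M = 0"
  then have no_M: "BM j = 0" if "j \<in> I" for j
    using finite_I feasible_equilibrium(1) that sum_nonneg_eq_0_iff by blast
  show "\<forall>i\<in>I. B0 i = B i"
  proof (rule ccontr)
    assume "\<not> (\<forall>i\<in>I. B0 i = B i)"
    then obtain i where i: "i \<in> I" "B0 i \<noteq> B i"
      by blast
    then have "B0 i < BS i"
      using full_usage[OF i(1)] no_M[OF i(1)] B0_le_B[OF i(1)] by simp
    have "\<forall>\<^sub>F t in at_right 0. BS i * price_S total_S < t * price_M t + (BS i - t) * price_S (total_S - t)"
      using R0_pos Nm_pos Nf_pos lS_pos \<alpha>_pos holding_le_total[OF i(1)] \<open>B0 i < BS i\<close> B0_nonneg[OF i(1)]
      by (intro entering_empty_market_pays) auto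
    then obtain t where t: "0 < t" "t < BS i - B0 i"
      and gain: "BS i * price_S total_S < t * price_M t + (BS i - t) * price_S (total_S - t)"
      using \<open>B0 i < BS i\<close> by (elim at_right_0_witness) auto
    have "(BS i - t) * price_S (total_S - BS i + (BS i - t)) + t * price_M (total_M - BM i + t)
        \<le> BS i * price_S total_S + BM i * price_M total_M"
      using i t full_usage[OF i(1)] no_M[OF i(1)] by (intro no_profitable_deviation) auto
    with gain show False
      using \<open>total_M = 0\<close> no_M[OF i(1)] by simp
  qed
next
  assume "\<forall>i\<in>I. B0 i = B i"
  then have "BM i = 0" if "i \<in> I" for i
    using feasible_equilibrium[OF that] that by force
  then show "total_M = 0"
    by simp
qed

lemma welfare_ge_all_small:
  shows "welfare 0 (sum B I) \<le> welfare total_M total_S"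
    and "welfare total_M total_S = welfare 0 (sum B I) \<longleftrightarrow> (\<forall>i\<in>I. B0 i = B i)"
proof -
  have "welfare 0 (sum B I) < welfare total_M total_S" if "0 < total_M"
  proof -
    have "welfare 0 (sum B I) < welfare total_M total_S
        + (sum B I - total_S) * (price_S total_S - price_M total_M)"
      using that total_S_pos total_usage by (intro welfare_lt_tangent) auto
    moreover have "(sum B I - total_S) * (price_S total_S - price_M total_M) \<le> 0"
      using that total_usage price_S_le_price_M by (intro mult_nonneg_nonpos) auto
    ultimately show ?thesis
      by linarith
  qed
  moreover have "welfare total_M total_S = welfare 0 (sum B I)" if "total_M = 0"
    using that total_usage by simp
  moreover have "0 \<le> total_M"
    using feasible_equilibrium(1) by (simp add: sum_nonneg)
  ultimately show "welfare 0 (sum B I) \<le> welfare total_M total_S"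
    and "welfare total_M total_S = welfare 0 (sum B I) \<longleftrightarrow> (\<forall>i\<in>I. B0 i = B i)"
    using total_M_eq_0_iff by force+
qed

lemma unconstrained_prices_balance:
  assumes "\<And>i. i \<in> I \<Longrightarrow> B0 i = 0"
  shows "0 < total_M" and "price_S total_S = price_M total_M"
proof -
  obtain i where "i \<in> I"
    using I_nonempty by blast
  then have "total_M \<noteq> 0"
    using total_M_eq_0_iff assms B_pos by force
  then show "0 < total_M"
    using feasible_equilibrium(1) sum_nonneg[of I BM] by force
  then show "price_S total_S = price_M total_M"
    using price_S_le_price_M price_M_le_price_S assms by (auto intro: order_antisym)
qed

lemma unconstrained_share:
  assumes "\<And>i. i \<in> I \<Longrightarrow> B0 i = 0"
  shows "Nm * total_S = effective_Nf * total_M"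
  using unconstrained_prices_balance[OF assms] total_S_pos by (intro balanced_prices_share)

lemma unconstrained_welfare_max:
  assumes "\<And>i. i \<in> I \<Longrightarrow> B0 i = 0" and "0 \<le> M" "0 \<le> S" "M + S = sum B I" "S \<noteq> total_S"
  shows "welfare M S < welfare total_M total_S"
  using welfare_lt_tangent[of total_M total_S M S] unconstrained_prices_balance[OF assms(1)]
    total_S_pos total_usage assms by simp

end

theorem theorem3:
  fixes I :: "'i set" and B B0 BMw BSw BMo BSo :: "'i \<Rightarrow> real"
    and R0 lS Nm Nf \<alpha> :: real
  assumes "finite I" and "I \<noteq> {}"
    and "\<forall>i\<in>I. B i > 0" and "\<forall>i\<in>I. 0 \<le> B0 i \<and> B0 i \<le> B i"
    and "R0 > 0" and "lS > 1" and "Nm > 0" and "Nf > 0" and "0 < \<alpha>" and "\<alpha> < 1"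
    and NEw: "is_NE R0 lS Nm Nf \<alpha> I B B0 BMw BSw"
    and NEo: "is_NE R0 lS Nm Nf \<alpha> I B (\<lambda>_. 0) BMo BSo"
  shows "let a = Nf * lS powr (1 / \<alpha> - 1);
             SWw = social_welfare R0 lS Nm Nf \<alpha> I BMw BSw;
             SWo = social_welfare R0 lS Nm Nf \<alpha> I BMo BSo
         in (a / (a + Nm) * (\<Sum>i\<in>I. B i) < (\<Sum>i\<in>I. B0 i) \<longrightarrow> SWw < SWo)
            \<and> SWw / SWo \<ge> (a / (a + Nm)) powr \<alpha>
            \<and> (SWw / SWo = (a / (a + Nm)) powr \<alpha> \<longleftrightarrow> (\<forall>i\<in>I. B0 i = B i))"
proof -
  interpret con: bandwidth_equilibrium R0 lS Nm Nf \<alpha> I B B0 BMw BSw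
    using assms by unfold_locales auto
  interpret unc: bandwidth_equilibrium R0 lS Nm Nf \<alpha> I B "\<lambda>_. 0" BMo BSo
    using assms by unfold_locales auto
  define a where "a = con.effective_Nf"
  define r where "r = (a / (a + Nm)) powr \<alpha>"
  have Wo_pos: "0 < con.welfare unc.total_M unc.total_S"
    using unc.unconstrained_prices_balance(1) unc.total_S_pos by (intro con.welfare_pos) auto
  have all_small: "con.welfare 0 (sum B I) = r * con.welfare unc.total_M unc.total_S"
    using con.welfare_all_small[OF unc.unconstrained_prices_balance(1) unc.unconstrained_share]
    by (simp add: unc.total_usage a_def r_def)
  have So: "unc.total_S = a / (a + Nm) * sum B I"
    using unc.unconstrained_share unc.total_usage[symmetric] con.effective_Nf_pos assms
    by (simp add: a_def field_simps)
  have loss: "con.welfare con.total_M con.total_S < con.welfare unc.total_M unc.total_S"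
    if "a / (a + Nm) * sum B I < sum B0 I"
  proof (rule unc.unconstrained_welfare_max)
    have "sum B0 I \<le> con.total_S"
      using con.feasible_equilibrium(2) by (simp add: sum_mono)
    then show "con.total_S \<noteq> unc.total_S"
      using that So by simp
  qed (use con.total_usage con.feasible_equilibrium in \<open>auto simp: sum_nonneg\<close>)
  show ?thesis
    unfolding Let_def con.social_welfare_eq a_def[unfolded con.effective_Nf_def, symmetric] r_def[symmetric]
    using loss con.welfare_ge_all_small Wo_pos all_small
    by (auto simp: pos_le_divide_eq)
qed

end
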